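(* Let $q\ge1$ and $t$ be integers with $0\le t<q$, and let $\mathcal{C}_{q,t}^{\mathrm{base}}=\bigcup_{i=0}^{\lfloor (q-t-1)/(t+1)\rfloor}\mathcal{S}_{q-t-i(t+1)}^q.$ Then: (a) for every $1\le j\le t!$, the code $\big(\mathcal{S}_{\mathrm{ins}}^t(\mathcal{C}_{q,t}^{\mathrm{base}})\big)_j$ is a $t$-tail-deletion-correcting code and $\big|\big(\mathcal{S}_{\mathrm{ins}}^t(\mathcal{C}_{q,t}^{\mathrm{base}})\big)_j\big|=|\mathcal{C}_{q,t}^{\mathrm{base}}|=q!\sum_{i=0}^{\lfloor (q-t-1)/(t+1)\rfloor}\frac{1}{(t+i(t+1))!};$ (b) for every $1\le j_1<j_2\le t!$, the codes $\big(\mathcal{S}_{\mathrm{ins}}^t(\mathcal{C}_{q,t}^{\mathrm{base}})\big)_{j_1}$ and $\big(\mathcal{S}_{\mathrm{ins}}^t(\mathcal{C}_{q,t}^{\mathrm{base}})\big)_{j_2}$ are disjoint; (c) if $q\not\equiv 0 \pmod{t+1}$, then $\big(\mathcal{S}_{\mathrm{ins}}^t(\mathcal{C}_{q,t}^{\mathrm{base}})\big)_1\cup\mathcal{S}_1^q$ is a $t$-tail-deletion-correcting code.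
   Context: Let $[q]=\{0,1,\dots,q-1\}$. For $1\le m\le q$, a partial permutation of length $m$ over $[q]$ is a sequence $\pi=(\pi_1,\dots,\pi_m)$ of $m$ pairwise distinct elements of $[q]$; $|\pi|=m$. Let $\mathcal{S}_m^q$ be the set of those of length $m$ and $\mathcal{S}_{\mathrm{all}}^q=\bigcup_{m=1}^{q}\mathcal{S}_m^q$. A code is any subset of $\mathcal{S}_{\mathrm{all}}^q$. Juxtaposition $\omega\pi$ denotes concatenation with $\omega$ on the left. For $\pi$ of length $m$ and integer $j\ge 0$, $\pi_{\downarrow j}=(\pi_{k+1},\dots,\pi_m)$ with $k=\min(j,m-1)$ (leftmost symbols are deleted; the last symbol is never deleted); $\mathcal{B}_{\mathrm{del}}^t(\pi)=\{\pi_{\downarrow j}:0\le j\le t\}$. A code $\mathcal{C}$ is $t$-tail-deletion-correcting if $\mathcal{B}_{\mathrm{del}}^t(\pi_1)\cap\mathcal{B}_{\mathrm{del}}^t(\pi_2)=\emptyset$ for all distinct $\pi_1,\pi_2\in\mathcal{C}$. For $\pi\in\mathcal{S}_{\mathrm{all}}^q$, $\mathcal{S}_{\mathrm{ins}}^t(\pi)$ is the set of all $\omega\pi\in\mathcal{S}_{\mathrm{all}}^q$ with $\omega$ a sequence of exactly $t$ elements of $[q]$ (entries of $\omega\pi$ pairwise distinct); if $|\pi|\le q-t$ it has $\binom{q-|\pi|}{t}t!$ elements. Its elements are listed in increasing lexicographic order and $(\mathcal{S}_{\mathrm{ins}}^t(\pi))_j$ denotes the $j$-th one. For a code $\mathcal{C}$,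 $(\mathcal{S}_{\mathrm{ins}}^t(\mathcal{C}))_j=\{(\mathcal{S}_{\mathrm{ins}}^t(\pi))_j:\pi\in\mathcal{C}\}$. *)

theory Defs
  imports Complex_Main "HOL-Library.List_Lexorder"
begin

(* Partial permutations over [q] = {0..<q} are represented as lists of naturals.
   List_Lexorder provides the lexicographic order on lists (for lists of equal
   length it is the usual lexicographic order). *)

definition pperm :: "nat \<Rightarrow> nat \<Rightarrow> nat list set" where
  "pperm m q = {xs. length xs = m \<and> distinct xs \<and> set xs \<subseteq> {..<q}}"

definition pperm_all :: "nat \<Rightarrow> nat list set" where
  "pperm_all q = (\<Union>m\<in>{1..q}. pperm m q)"

definition tail_del :: "nat \<Rightarrow> nat list \<Rightarrow> nat list" where
  "tail_del j xs = drop (min j (length xs - 1)) xs"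

definition del_ball :: "nat \<Rightarrow> nat list \<Rightarrow> nat list set" where
  "del_ball t xs = {tail_del j xs | j. j \<le> t}"

definition tail_del_correcting :: "nat \<Rightarrow> nat list set \<Rightarrow> bool" where
  "tail_del_correcting t C \<longleftrightarrow>
     (\<forall>p1\<in>C. \<forall>p2\<in>C. p1 \<noteq> p2 \<longrightarrow> del_ball t p1 \<inter> del_ball t p2 = {})"

definition ins_set :: "nat \<Rightarrow> nat \<Rightarrow> nat list \<Rightarrow> nat list set" where
  "ins_set q t xs = {w @ xs | w. length w = t \<and> w @ xs \<in> pperm_all q}"

(* j-th element (1-based) in increasing lexicographic order *)
definition ins_nth :: "nat \<Rightarrow> nat \<Rightarrow> nat list \<Rightarrow> nat \<Rightarrow> nat list" where
  "ins_nth q t xs j = sorted_list_of_set (ins_set q t xs) ! (j - 1)"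

definition ins_code :: "nat \<Rightarrow> nat \<Rightarrow> nat list set \<Rightarrow> nat \<Rightarrow> nat list set" where
  "ins_code q t C j = (\<lambda>xs. ins_nth q t xs j) ` C"

definition Cbase :: "nat \<Rightarrow> nat \<Rightarrow> nat list set" where
  "Cbase q t = (\<Union>i\<in>{0..(q - t - 1) div (t + 1)}. pperm (q - t - i * (t + 1)) q)"

end

(* A codeword of the j-th insertion code is w @ xs with |w| = t and xs a base word, so
   dropping t symbols recovers xs, and all codewords have length > t and length congruent
   to q modulo t + 1 (base word lengths differ by multiples of t + 1). If the deletion
   balls of two codewords p1, p2 meet, then drop a p1 = drop b p2 with a, b <= t; the
   length congruence forces a = b, hence drop t p1 = drop t p2 and the base words agree.
   Distinct indices j give distinct extensions of the same base word, so the codes are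
   disjoint. If t + 1 does not divide q, no base word has length 1, so every codeword is
   longer than t + 1 and its deletion ball avoids the words of length one, whose balls
   are singletons. *)

theory Submission
  imports Defs
begin

lemma finite_pperm: "finite (pperm m q)"
proof -
  have "pperm m q \<subseteq> {xs. set xs \<subseteq> {..<q} \<and> length xs = m}"
    by (auto simp: pperm_def)
  then show ?thesis
    using finite_lists_length_eq[of "{..<q}" m] finite_subset by blast
qed

lemma card_pperm:
  assumes "m \<le> q"
  shows "real (card (pperm m q)) = fact q / fact (q - m)"
proof -
  have "card (pperm m q) = \<Prod>{Suc (q - m)..q}"
    using card_lists_distinct_length_eq[of "{..<q}" m] assms by (simp add: pperm_def)
  moreover have "(fact q :: nat) = fact (q - m) * \<Prod>{Suc (q - m)..q}"
    by (rule fact_eq_fact_times) simp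
  then have "(fact q :: real) = fact (q - m) * real (\<Prod>{Suc (q - m)..q})"
    by (metis of_nat_fact of_nat_mult)
  ultimately show ?thesis
    by simp
qed

lemma pperm_disjoint: "m \<noteq> m' \<Longrightarrow> pperm m q \<inter> pperm m' q = {}"
  by (auto simp: pperm_def)

lemma finite_ins_set: "finite (ins_set q t xs)"
proof (rule finite_subset)
  show "finite (pperm_all q)"
    unfolding pperm_all_def using finite_pperm by blast
qed (auto simp: ins_set_def)

lemma ins_set_memD:
  assumes "ys \<in> ins_set q t xs"
  shows "drop t ys = xs" "length ys = length xs + t"
  using assms by (auto simp: ins_set_def)

lemma fact_le_card_ins_set:
  assumes "distinct xs" "set xs \<subseteq> {..<q}" "xs \<noteq> []" "length xs + t \<le> q"
  shows "fact t \<le> card (ins_set q t xs)"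
proof -
  have "t \<le> card ({..<q} - set xs)"
    using assms by (simp add: card_Diff_subset distinct_card)
  then obtain B where B: "B \<subseteq> {..<q} - set xs" "card B = t" "finite B"
    by (rule obtain_subset_with_card_n)
  define W where "W = {w. length w = t \<and> distinct w \<and> set w \<subseteq> B}"
  have "card W = fact t"
    using card_lists_distinct_length_eq[OF B(3), of t] B(2)
    by (simp add: W_def fact_prod)
  moreover have "(\<lambda>w. w @ xs) ` W \<subseteq> ins_set q t xs"
  proof
    fix ys assume "ys \<in> (\<lambda>w. w @ xs) ` W"
    then obtain w where w: "ys = w @ xs" "length w = t" "distinct w" "set w \<subseteq> B"
      by (auto simp: W_def)
    have "w @ xs \<in> pperm (length (w @ xs)) q"
      using w B(1) assms by (auto simp: pperm_def)
    moreover have "length (w @ xs) \<in> {1..q}"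
      using w assms by (auto simp: Suc_le_eq)
    ultimately show "ys \<in> ins_set q t xs"
      unfolding ins_set_def pperm_all_def using w by blast
  qed
  moreover have "card ((\<lambda>w. w @ xs) ` W) = card W"
    by (rule card_image) (auto simp: inj_on_def)
  ultimately show ?thesis
    using card_mono[OF finite_ins_set] by metis
qed

lemma ins_nth_mem:
  assumes "1 \<le> j" "j \<le> card (ins_set q t xs)"
  shows "ins_nth q t xs j \<in> ins_set q t xs"
proof -
  have "j - 1 < length (sorted_list_of_set (ins_set q t xs))"
    using assms by simp
  then show ?thesis
    unfolding ins_nth_def using nth_mem finite_ins_set
    by (metis sorted_list_of_set.set_sorted_key_list_of_set)
qed

lemma
  assumes "1 \<le> j" "j \<le> card (ins_set q t xs)"
  shows drop_ins_nth: "drop t (ins_nth q t xs j) = xs"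
    and length_ins_nth: "length (ins_nth q t xs j) = length xs + t"
  using ins_set_memD[OF ins_nth_mem[OF assms]] by auto

lemma ins_nth_eq_iff:
  assumes "1 \<le> j1" "j1 \<le> card (ins_set q t xs)" "1 \<le> j2" "j2 \<le> card (ins_set q t xs)"
  shows "ins_nth q t xs j1 = ins_nth q t xs j2 \<longleftrightarrow> j1 = j2"
  using assms unfolding ins_nth_def by (auto simp: nth_eq_iff_index_eq)

lemma inj_on_ins_nth:
  assumes "\<forall>xs\<in>C. 1 \<le> j \<and> j \<le> card (ins_set q t xs)"
  shows "inj_on (\<lambda>xs. ins_nth q t xs j) C"
  using assms drop_ins_nth by (intro inj_onI) metis

lemma card_ins_code:
  assumes "\<forall>xs\<in>C. 1 \<le> j \<and> j \<le> card (ins_set q t xs)"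
  shows "card (ins_code q t C j) = card C"
  unfolding ins_code_def using card_image[OF inj_on_ins_nth[OF assms]] .

lemma ins_code_disjoint:
  assumes "\<forall>xs\<in>C. 1 \<le> j1 \<and> j1 \<le> card (ins_set q t xs)"
    and "\<forall>xs\<in>C. 1 \<le> j2 \<and> j2 \<le> card (ins_set q t xs)"
    and "j1 \<noteq> j2"
  shows "ins_code q t C j1 \<inter> ins_code q t C j2 = {}"
proof -
  have "ins_nth q t xs j1 \<noteq> ins_nth q t ys j2" if "xs \<in> C" "ys \<in> C" for xs ys
  proof (cases "xs = ys")
    case True
    then show ?thesis
      using assms that ins_nth_eq_iff by blast
  next
    case False
    then show ?thesis
      using assms that drop_ins_nth by metis
  qed
  then show ?thesis
    unfolding ins_code_def by blast
qed

lemma del_ball_eq_drops: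
  assumes "t < length p"
  shows "del_ball t p = {drop k p | k. k \<le> t}"
  using assms unfolding del_ball_def tail_del_def by (auto simp: min_def)

lemma del_ball_length_one:
  assumes "length p = 1"
  shows "del_ball t p = {p}"
  using assms unfolding del_ball_def tail_del_def by auto

lemma eq_if_cong_bounded_shifts:
  fixes l1 l2 a b t :: nat
  assumes "l1 + b = l2 + a" "l1 mod (t + 1) = l2 mod (t + 1)" "a \<le> t" "b \<le> t"
  shows "a = b"
proof -
  have "a = b" if "l1 + b = l2 + a" "l1 mod (t + 1) = l2 mod (t + 1)" "a \<le> b" "b \<le> t"
    for l1 l2 a b
  proof -
    have "l2 - l1 = b - a" "l1 \<le> l2"
      using that(1,3) by linarith+
    then have "(t + 1) dvd (b - a)"
      using that(2) mod_eq_dvd_iff_nat by metis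
    moreover have "b - a < t + 1"
      using that(4) by linarith
    ultimately have "b - a = 0"
      by (meson nat_dvd_not_less neq0_conv)
    then show "a = b"
      using that(3) by simp
  qed
  from this[of l1 b l2 a] this[of l2 a l1 b] show ?thesis
    using assms by (metis nat_le_linear)
qed

lemma tail_del_correcting_if_lengths_cong:
  assumes long: "\<forall>p\<in>C. t < length p"
    and cong: "\<forall>p1\<in>C. \<forall>p2\<in>C. length p1 mod (t + 1) = length p2 mod (t + 1)"
    and inj: "inj_on (drop t) C"
  shows "tail_del_correcting t C"
  unfolding tail_del_correcting_def
proof (intro ballI impI)
  fix p1 p2 assume p: "p1 \<in> C" "p2 \<in> C" "p1 \<noteq> p2"
  show "del_ball t p1 \<inter> del_ball t p2 = {}"
  proof (rule ccontr)
    assume "del_ball t p1 \<inter> del_ball t p2 \<noteq> {}"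
    then obtain y where "y \<in> del_ball t p1" "y \<in> del_ball t p2"
      by blast
    then have "y \<in> {drop k p1 | k. k \<le> t}" "y \<in> {drop k p2 | k. k \<le> t}"
      using del_ball_eq_drops long p(1,2) by simp_all
    then obtain a b where ab: "a \<le> t" "b \<le> t" "drop a p1 = drop b p2"
      by auto
    then have "length p1 - a = length p2 - b"
      by (metis length_drop)
    then have "length p1 + b = length p2 + a"
      using long p ab(1,2) by fastforce
    then have "a = b"
      using eq_if_cong_bounded_shifts cong p ab by blast
    then have "drop t p1 = drop t p2"
      using ab by (metis drop_drop le_add_diff_inverse2)
    then show False
      using inj p by (meson inj_onD)
  qed
qed

lemma tail_del_correcting_Un_length_one:
  assumes "tail_del_correcting t C" "\<forall>p\<in>C. t + 1 < length p" "\<forall>p\<in>D. length p = 1"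
  shows "tail_del_correcting t (C \<union> D)"
proof -
  have short: "del_ball t p = {p}" if "p \<in> D" for p
    using assms(3) that by (simp add: del_ball_length_one)
  have long: "1 < length y" if p: "p \<in> C" "y \<in> del_ball t p" for p y
  proof -
    have "t < length p"
      using p(1) assms(2) by auto
    then obtain k where "k \<le> t" "y = drop k p"
      using p(2) del_ball_eq_drops[of t p] by auto
    then show ?thesis
      using p(1) assms(2) by auto
  qed
  show ?thesis
    unfolding tail_del_correcting_def
  proof (intro ballI impI)
    fix p1 p2 assume p: "p1 \<in> C \<union> D" "p2 \<in> C \<union> D" "p1 \<noteq> p2"
    consider "p1 \<in> C" "p2 \<in> C" | "p1 \<in> D \<or> p2 \<in> D"
      using p by blast
    then show "del_ball t p1 \<inter> del_ball t p2 = {}"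
    proof cases
      case 1
      then show ?thesis
        using assms(1) p(3) unfolding tail_del_correcting_def by blast
    next
      case 2
      then show ?thesis
      proof
        assume "p1 \<in> D"
        then have "p1 \<notin> del_ball t p2"
          using p(2,3) short long assms(3) by fastforce
        then show ?thesis
          using short[OF \<open>p1 \<in> D\<close>] by simp
      next
        assume "p2 \<in> D"
        then have "p2 \<notin> del_ball t p1"
          using p(1,3) short long assms(3) by fastforce
        then show ?thesis
          using short[OF \<open>p2 \<in> D\<close>] by simp
      qed
    qed
  qed
qed

lemma tail_del_correcting_ins_code:
  assumes index: "\<forall>xs\<in>C. 1 \<le> j \<and> j \<le> card (ins_set q t xs)"
    and "[] \<notin> C"
    and "\<forall>xs\<in>C. (length xs + t) mod (t + 1) = r"
  shows "tail_del_correcting t (ins_code q t C j)"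
proof (rule tail_del_correcting_if_lengths_cong)
  have "t < length p \<and> length p mod (t + 1) = r" if "p \<in> ins_code q t C j" for p
    using that assms length_ins_nth unfolding ins_code_def by fastforce
  then show "\<forall>p\<in>ins_code q t C j. t < length p"
    and "\<forall>p1\<in>ins_code q t C j. \<forall>p2\<in>ins_code q t C j. length p1 mod (t + 1) = length p2 mod (t + 1)"
    by auto
  show "inj_on (drop t) (ins_code q t C j)"
    using index drop_ins_nth unfolding ins_code_def by (auto intro: inj_onI)
qed

lemma le_div_imp_add_mult_less:
  fixes i q t :: nat
  assumes "i \<le> (q - t - 1) div (t + 1)" "t < q"
  shows "t + i * (t + 1) < q"
proof -
  have "i * (t + 1) \<le> (q - t - 1) div (t + 1) * (t + 1)"
    using assms(1) by (rule mult_le_mono1)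
  also have "\<dots> \<le> q - t - 1"
    by (rule div_times_less_eq_dividend)
  finally show ?thesis
    using assms(2) by linarith
qed

lemma Cbase_memD:
  assumes "xs \<in> Cbase q t" "t < q"
  shows "distinct xs" "set xs \<subseteq> {..<q}" "xs \<noteq> []" "length xs + t \<le> q"
    and "(length xs + t) mod (t + 1) = q mod (t + 1)"
proof -
  obtain i where i: "i \<le> (q - t - 1) div (t + 1)" "xs \<in> pperm (q - t - i * (t + 1)) q"
    using assms(1) unfolding Cbase_def by auto
  have "t + i * (t + 1) < q"
    using le_div_imp_add_mult_less[OF i(1) assms(2)] .
  then have len: "length xs + t + i * (t + 1) = q"
    using i(2) by (auto simp: pperm_def)
  show "distinct xs" "set xs \<subseteq> {..<q}"
    using i(2) by (auto simp: pperm_def)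
  show "xs \<noteq> []" "length xs + t \<le> q"
    using len \<open>t + i * (t + 1) < q\<close> by auto
  show "(length xs + t) mod (t + 1) = q mod (t + 1)"
    using len mod_mult_self1[of "length xs + t" i "t + 1"] by simp
qed

lemma card_Cbase:
  assumes "t < q"
  shows "real (card (Cbase q t)) = fact q * (\<Sum>i=0..(q - t - 1) div (t + 1). 1 / fact (t + i * (t + 1)))"
proof -
  let ?D = "(q - t - 1) div (t + 1)"
  have bound: "t + i * (t + 1) < q" if "i \<in> {0..?D}" for i
    using le_div_imp_add_mult_less that assms by simp
  have "q - t - i * (t + 1) \<noteq> q - t - j * (t + 1)"
    if "i \<in> {0..?D}" "j \<in> {0..?D}" "i \<noteq> j" for i j
  proof -
    have "i * (t + 1) \<noteq> j * (t + 1)"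
      using that(3) mult_cancel2[of i "t + 1" j] by simp
    then show ?thesis
      using bound[OF that(1)] bound[OF that(2)] by linarith
  qed
  then have "card (Cbase q t) = (\<Sum>i=0..?D. card (pperm (q - t - i * (t + 1)) q))"
    unfolding Cbase_def
    by (intro card_UN_disjoint ballI impI finite_atLeastAtMost finite_pperm pperm_disjoint) auto
  also have "real \<dots> = (\<Sum>i=0..?D. fact q / fact (t + i * (t + 1)))"
  proof (simp only: of_nat_sum, rule sum.cong[OF refl])
    fix i assume "i \<in> {0..?D}"
    then have "q - (q - t - i * (t + 1)) = t + i * (t + 1)"
      using bound by fastforce
    then show "real (card (pperm (q - t - i * (t + 1)) q)) = fact q / fact (t + i * (t + 1))"
      using card_pperm[of "q - t - i * (t + 1)" q] by simp
  qed
  finally show ?thesis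
    by (simp add: sum_distrib_left)
qed

theorem mainTheorem9:
  fixes q t :: nat
  assumes "1 \<le> q" and "t < q"
  shows "(\<forall>j. 1 \<le> j \<and> j \<le> fact t \<longrightarrow>
            tail_del_correcting t (ins_code q t (Cbase q t) j) \<and>
            card (ins_code q t (Cbase q t) j) = card (Cbase q t) \<and>
            real (card (Cbase q t)) =
              fact q * (\<Sum>i=0..(q - t - 1) div (t + 1). 1 / fact (t + i * (t + 1))))
       \<and> (\<forall>j1 j2. 1 \<le> j1 \<and> j1 < j2 \<and> j2 \<le> fact t \<longrightarrow>
            ins_code q t (Cbase q t) j1 \<inter> ins_code q t (Cbase q t) j2 = {})
       \<and> (\<not> (t + 1) dvd q \<longrightarrow>
            tail_del_correcting t (ins_code q t (Cbase q t) 1 \<union> pperm 1 q))"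
proof -
  note Cbase = Cbase_memD[OF _ assms(2)]
  have index: "\<forall>xs\<in>Cbase q t. 1 \<le> j \<and> j \<le> card (ins_set q t xs)"
    if "1 \<le> j" "j \<le> fact t" for j
    using that fact_le_card_ins_set[OF Cbase(1-4)] le_trans by blast
  have correcting: "tail_del_correcting t (ins_code q t (Cbase q t) j)"
    if "1 \<le> j" "j \<le> fact t" for j
    using Cbase(3,5) by (intro tail_del_correcting_ins_code[OF index[OF that]]) auto
  have long: "t + 1 < length p"
    if ndvd: "\<not> (t + 1) dvd q" and p: "p \<in> ins_code q t (Cbase q t) 1" for p
  proof -
    obtain xs where xs: "xs \<in> Cbase q t" "p = ins_nth q t xs 1"
      using p unfolding ins_code_def by blast
    have "1 \<le> card (ins_set q t xs)"
      using index[of 1] xs(1) by simp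
    then have "length p = length xs + t"
      using xs(2) length_ins_nth by simp
    moreover have "length xs \<noteq> 1"
      using Cbase(5)[OF xs(1)] ndvd by (auto simp: dvd_eq_mod_eq_0)
    ultimately show ?thesis
      using Cbase(3)[OF xs(1)] by (simp add: Suc_lessI)
  qed
  show ?thesis
    using correcting card_ins_code[OF index] card_Cbase[OF assms(2)]
      ins_code_disjoint[OF index index] long
      tail_del_correcting_Un_length_one[OF correcting]
    by (auto simp: pperm_def)
qed

end
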